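(* Let $\mathcal{A}=\mathcal{R}*_K\mathcal{S}*_L\mathcal{T}\in\mathbb{C}^{I_1\times\cdots\times I_N\times J_1\times\cdots\times J_M}$, where $\mathcal{R}\in\mathbb{C}^{I_1\times\cdots\times I_N\times H_1\times\cdots\times H_K}$, $\mathcal{S}\in\mathbb{C}^{H_1\times\cdots\times H_K\times G_1\times\cdots\times G_L}$ and $\mathcal{T}\in\mathbb{C}^{G_1\times\cdots\times G_L\times J_1\times\cdots\times J_M}$, and let $\mathcal{B}=\mathcal{T}^{\dagger}*_L(\mathcal{A}*_M\mathcal{T}^{\dagger})^{\dagger}$ and $\mathcal{C}=(\mathcal{R}^{\dagger}*_N\mathcal{A})^{\dagger}*_K\mathcal{R}^{\dagger}$. Then $\mathcal{B}=\mathcal{A}^{\dagger}$ if and only if $\mathcal{C}=\mathcal{A}_{\pi\dagger}$; and $\mathcal{B}=\mathcal{A}_{\pi\dagger}$ if and only if $\mathcal{C}=\mathcal{A}^{\dagger}$.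
   Context: $\mathbb{C}^{I_1\times\cdots\times I_N}$ denotes the set of complex tensors of order $N$ and dimension $I_1\times\cdots\times I_N$. For $\mathcal{A}\in\mathbb{C}^{I_1\times\cdots\times I_N\times K_1\times\cdots\times K_N}$ and $\mathcal{B}\in\mathbb{C}^{K_1\times\cdots\times K_N\times J_1\times\cdots\times J_M}$, the Einstein product $\mathcal{A}*_N\mathcal{B}$ is defined by $(\mathcal{A}*_N\mathcal{B})_{i_1\dots i_N j_1\dots j_M}=\sum_{k_1,\dots,k_N}a_{i_1\dots i_N k_1\dots k_N}b_{k_1\dots k_N j_1\dots j_M}$; it is associative. $\mathcal{A}^H$ denotes the conjugate transpose. For $\mathcal{A}\in\mathbb{C}^{I_1\times\cdots\times I_N\times J_1\times\cdots\times J_M}$ the Moore–Penrose inverse $\mathcal{A}^{\dagger}$ is the unique $\mathcal{X}\in\mathbb{C}^{J_1\times\cdots\times J_M\times I_1\times\cdots\times I_N}$ with $\mathcal{A}*_M\mathcal{X}*_N\mathcal{A}=\mathcal{A}$, $\mathcal{X}*_N\mathcal{A}*_M\mathcal{X}=\mathcal{X}$, $(\mathcal{A}*_M\mathcal{X})^H=\mathcal{A}*_M\mathcal{X}$, $(\mathcal{X}*_N\mathcal{A})^H=\mathcal{X}*_N\mathcal{A}$. Given the factorization $\mathcal{A}=\mathcal{R}*_K\mathcal{S}*_L\mathcal{T}$, the product Moore–Penrose inverse of $\mathcal{A}$ is $\mathcal{A}_{\pi\dagger}=\mathcal{T}^{\dagger}*_L(\mathcal{R}^{\dagger}*_N\mathcal{A}*_M\mathcal{T}^{\dagger})^{\dagger}*_K\mathcal{R}^{\dagger}$.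 *)

theory Defs
  imports Complex_Main
begin

text \<open>A dimension vector I = [I_1,...,I_N] is a nat list; its multi-indices are
  the lists [i_1,...,i_N] with i_k < I_k (0-based).  A tensor in
  C^{I_1 x...x I_N x J_1 x...x J_M} is represented as a function of the two index
  blocks, vanishing outside the index range.\<close>

definition midx :: "nat list \<Rightarrow> nat list set" where
  "midx D = {is. length is = length D \<and> (\<forall>k<length D. is ! k < D ! k)}"

type_synonym tensor = "nat list \<Rightarrow> nat list \<Rightarrow> complex"

definition tens :: "nat list \<Rightarrow> nat list \<Rightarrow> tensor set" where
  "tens I J = {A. \<forall>is js. (is \<notin> midx I \<or> js \<notin> midx J) \<longrightarrow> A is js = 0}"

definition ein :: "nat list \<Rightarrow> tensor \<Rightarrow> tensor \<Rightarrow> tensor" where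
  "ein K A B = (\<lambda>is js. \<Sum>ks\<in>midx K. A is ks * B ks js)"

definition ctrans :: "tensor \<Rightarrow> tensor" where
  "ctrans A = (\<lambda>js is. cnj (A is js))"

definition is_mpinv :: "nat list \<Rightarrow> nat list \<Rightarrow> tensor \<Rightarrow> tensor \<Rightarrow> bool" where
  "is_mpinv I J A X \<longleftrightarrow> X \<in> tens J I \<and>
     ein I (ein J A X) A = A \<and>
     ein J (ein I X A) X = X \<and>
     ctrans (ein J A X) = ein J A X \<and>
     ctrans (ein I X A) = ein I X A"

definition mpinv :: "nat list \<Rightarrow> nat list \<Rightarrow> tensor \<Rightarrow> tensor" where
  "mpinv I J A = (THE X. is_mpinv I J A X)"

text \<open>Product Moore-Penrose inverse of A = R *_K S *_L T with
  R in C^{I x H}, S in C^{H x G}, T in C^{G x J}.\<close>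
definition pmpinv :: "nat list \<Rightarrow> nat list \<Rightarrow> nat list \<Rightarrow> nat list \<Rightarrow>
    tensor \<Rightarrow> tensor \<Rightarrow> tensor \<Rightarrow> tensor" where
  "pmpinv I J H G R A T =
     ein H (ein G (mpinv G J T) (mpinv H G (ein J (ein I (mpinv I H R) A) (mpinv G J T))))
       (mpinv I H R)"

end

theory Submission
  imports Defs "HOL-Library.Function_Algebras"
begin

(* Write M\<^sup>+ for the Moore-Penrose inverse and X = A T\<^sup>+, A1 = R\<^sup>+ A,
   X1 = R\<^sup>+ A T\<^sup>+. Since A = A T\<^sup>+ T, the candidate T\<^sup>+ X\<^sup>+ satisfies
   three Penrose equations for A automatically, and so does
   A1\<^sup>+ R\<^sup>+ since A = R R\<^sup>+ A; only the hermitian condition remains. X and X1 = R\<^sup>+ X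
   determine each other (X = R X1), so they share the projector X\<^sup>+ X = X1\<^sup>+ X1; likewise
   A1 A1\<^sup>+ = X1 X1\<^sup>+. Hence B = A\<^sup>+ iff T\<^sup>+ X1\<^sup>+ is the inverse of A1, and
   C = A\<^sup>+ iff X1\<^sup>+ R\<^sup>+ is the inverse of X; cancelling the outer factor R\<^sup>+
   resp. T\<^sup>+ turns these into C = A_pi and B = A_pi.
   Since mpinv is a definite description, existence of Moore-Penrose inverses is needed too:
   the powers of M = A\<^sup>H A satisfy a linear relation, which yields Q commuting with M
   and M Q M = M; then Q M Q\<^sup>H is the inverse of M and (Q M Q\<^sup>H) A\<^sup>H that of A. *)

lemma finite_midx: "finite (midx D)"
proof (rule finite_subset)
  show "midx D \<subseteq> {xs. set xs \<subseteq> {..<sum_list D} \<and> length xs = length D}"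
    by (auto simp: midx_def in_set_conv_nth) (metis elem_le_sum_list less_le_trans)
  show "finite {xs. set xs \<subseteq> {..<sum_list D} \<and> length xs = length D}"
    by (rule finite_lists_length_eq) simp
qed

lemma ein_assoc: "ein L (ein K A B) C = ein K A (ein L B C)"
  unfolding ein_def
  by (simp add: fun_eq_iff sum_distrib_left sum_distrib_right mult.assoc sum.swap[of _ "midx L"])

lemma ctrans_ctrans [simp]: "ctrans (ctrans A) = A"
  by (simp add: ctrans_def)

lemma ctrans_ein: "ctrans (ein K A B) = ein K (ctrans B) (ctrans A)"
  by (simp add: ctrans_def ein_def mult.commute)

lemma ein_tens: "A \<in> tens I K \<Longrightarrow> B \<in> tens K J \<Longrightarrow> ein K A B \<in> tens I J"
  by (auto simp: tens_def ein_def)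

lemma ctrans_tens: "A \<in> tens I J \<Longrightarrow> ctrans A \<in> tens J I"
  by (auto simp: tens_def ctrans_def)

lemma ein_0_right [simp]: "ein K A 0 = 0"
  by (simp add: ein_def fun_eq_iff)

lemma ein_diff_right: "ein K A (Z - W) = ein K A Z - ein K A W"
  by (simp add: ein_def fun_eq_iff right_diff_distrib sum_subtractf)

abbreviation hermitian :: "tensor \<Rightarrow> bool" where
  "hermitian X \<equiv> ctrans X = X"

lemma hermitian_ctrans_iff: "hermitian (ctrans X) \<longleftrightarrow> hermitian X"
  by (metis ctrans_ctrans)

lemma ein_ctrans_self_eq_0_iff:
  assumes rows: "\<And>is js. is \<notin> midx I \<Longrightarrow> E is js = 0"
  shows "ein I (ctrans E) E = 0 \<longleftrightarrow> E = 0"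
proof
  assume gram: "ein I (ctrans E) E = 0"
  show "E = 0"
  proof (intro ext)
    fix "is" js
    have "cnj z * z = complex_of_real ((cmod z)\<^sup>2)" for z
      by (simp only: complex_norm_square mult.commute)
    then have "complex_of_real (\<Sum>ks\<in>midx I. (cmod (E ks js))\<^sup>2) = ein I (ctrans E) E js js"
      by (simp only: ein_def ctrans_def of_real_sum)
    also have "\<dots> = 0"
      using gram by simp
    finally have "(\<Sum>ks\<in>midx I. (cmod (E ks js))\<^sup>2) = 0"
      by (simp only: of_real_eq_0_iff)
    then have "\<forall>ks\<in>midx I. E ks js = 0"
      by (simp add: sum_nonneg_eq_0_iff finite_midx)
    then show "E is js = 0 is js"
      using rows by (cases "is \<in> midx I") auto
  qed
qed simp

lemma ein_ctrans_cancel: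
  assumes "A \<in> tens I J" and "ein I (ctrans A) (ein J A Z) = ein I (ctrans A) (ein J A W)"
  shows "ein J A Z = ein J A W"
proof -
  define E where "E = ein J A (Z - W)"
  have "ein I (ctrans A) E = 0"
    using assms(2) by (simp add: E_def ein_diff_right)
  then have "ein I (ctrans E) E = 0"
    by (simp add: E_def ctrans_ein ein_assoc)
  moreover have "is \<notin> midx I \<Longrightarrow> E is js = 0" for "is" js
    using assms(1) by (simp add: E_def ein_def tens_def)
  ultimately have "E = 0"
    using ein_ctrans_self_eq_0_iff by blast
  then show ?thesis
    by (simp add: E_def ein_diff_right)
qed

section \<open>Uniqueness of the Moore--Penrose inverse\<close>

lemma is_mpinvD:
  assumes "is_mpinv I J A X"
  shows "X \<in> tens J I" "ein J A (ein I X A) = A" "ein I X (ein J A X) = X"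
    "hermitian (ein J A X)" "hermitian (ein I X A)"
  using assms by (simp_all add: is_mpinv_def ein_assoc)

lemma is_mpinv_absorb:
  assumes "is_mpinv I J A X"
  shows "ein J A (ein I X (ein J A Z)) = ein J A Z" "ein I X (ein J A (ein I X Z)) = ein I X Z"
  using is_mpinvD(2,3)[OF assms] by (metis ein_assoc)+

lemma is_mpinv_ctrans:
  assumes "is_mpinv I J A X"
  shows "is_mpinv J I (ctrans A) (ctrans X)"
proof -
  have "ein J (ein I (ctrans A) (ctrans X)) (ctrans A) = ctrans (ein I (ein J A X) A)"
    "ein I (ein J (ctrans X) (ctrans A)) (ctrans X) = ctrans (ein J (ein I X A) X)"
    "ein I (ctrans A) (ctrans X) = ctrans (ein I X A)"
    "ein J (ctrans X) (ctrans A) = ctrans (ein J A X)"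
    by (simp_all add: ctrans_ein ein_assoc)
  with assms show ?thesis
    by (simp add: is_mpinv_def ctrans_tens)
qed

lemma is_mpinv_ctrans_iff: "is_mpinv J I (ctrans A) (ctrans X) \<longleftrightarrow> is_mpinv I J A X"
  using is_mpinv_ctrans[of J I "ctrans A" "ctrans X"] is_mpinv_ctrans[of I J A X] by auto

lemma is_mpinv_unique:
  assumes X: "is_mpinv I J A X" and Y: "is_mpinv I J A Y"
  shows "X = Y"
proof -
  note x = is_mpinvD[OF X] and y = is_mpinvD[OF Y]
  have AY: "ctrans A = ein I (ctrans A) (ein J A Y)"
    by (metis ctrans_ein ein_assoc y(2,4))
  have XA: "ctrans A = ein J (ein I X A) (ctrans A)"
    by (metis ctrans_ein x(2,5))
  have YY: "Y = ein I (ctrans A) (ein J (ctrans Y) Y)"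
    by (metis ctrans_ein ein_assoc y(3,5))
  have "X = ein I X (ein J (ctrans X) (ctrans A))"
    using x(3,4) by (simp add: ctrans_ein)
  also have "\<dots> = ein I X (ein J A (ein I X (ein J A Y)))"
    by (subst AY) (metis ctrans_ein ein_assoc x(4))
  also have "\<dots> = ein I X (ein J A Y)"
    by (simp add: is_mpinv_absorb[OF X])
  also have "\<dots> = ein I (ein J (ein I X A) (ctrans A)) (ein J (ctrans Y) Y)"
    by (subst YY) (simp add: ein_assoc)
  also have "\<dots> = Y"
    using XA YY by simp
  finally show ?thesis .
qed

section \<open>Existence of the Moore--Penrose inverse\<close>

definition id_tensor :: "nat list \<Rightarrow> tensor" where
  "id_tensor J = (\<lambda>is js. if is = js \<and> is \<in> midx J then 1 else 0)"

lemma id_tensor_tens: "id_tensor J \<in> tens J J"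
  by (simp add: tens_def id_tensor_def)

lemma ein_id_tensor_left:
  assumes "X \<in> tens J K"
  shows "ein J (id_tensor J) X = X"
proof (intro ext)
  fix "is" js
  have "ein J (id_tensor J) X is js = (\<Sum>ks\<in>midx J. if ks = is then X is js else 0)"
    by (auto simp: ein_def id_tensor_def intro: sum.cong)
  then show "ein J (id_tensor J) X is js = X is js"
    using assms by (simp add: sum.delta finite_midx tens_def)
qed

lemma ein_id_tensor_right:
  assumes "X \<in> tens K J"
  shows "ein J X (id_tensor J) = X"
proof (intro ext)
  fix "is" js
  have "ein J X (id_tensor J) is js = (\<Sum>ks\<in>midx J. if ks = js then X is js else 0)"
    by (auto simp: ein_def id_tensor_def intro: sum.cong)
  then show "ein J X (id_tensor J) is js = X is js"
    using assms by (simp add: sum.delta finite_midx tens_def)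
qed

fun mpow :: "nat list \<Rightarrow> tensor \<Rightarrow> nat \<Rightarrow> tensor" where
  "mpow J M 0 = id_tensor J"
| "mpow J M (Suc k) = ein J M (mpow J M k)"

lemma mpow_tens: "M \<in> tens J J \<Longrightarrow> mpow J M k \<in> tens J J"
  by (induction k) (simp_all add: id_tensor_tens ein_tens)

lemma mpow_add: "M \<in> tens J J \<Longrightarrow> mpow J M (a + b) = ein J (mpow J M a) (mpow J M b)"
  by (induction a) (simp_all add: ein_id_tensor_left[OF mpow_tens] ein_assoc)

lemma mpow_Suc_right: "M \<in> tens J J \<Longrightarrow> mpow J M (Suc k) = ein J (mpow J M k) M"
  using mpow_add[of M J k 1] by (simp add: ein_id_tensor_right)

definition tscale :: "complex \<Rightarrow> tensor \<Rightarrow> tensor" where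
  "tscale c X = (\<lambda>is js. c * X is js)"

interpretation tensor: vector_space tscale
  by unfold_locales (simp_all add: tscale_def fun_eq_iff algebra_simps)

lemma sum_tensor_apply: "sum f F is js = (\<Sum>x\<in>F. f x is js)"
  by (induction F rule: infinite_finite_induct) simp_all

lemma ein_sum_left: "ein K (sum f F) B = (\<Sum>x\<in>F. ein K (f x) B)"
  by (simp add: ein_def fun_eq_iff sum_tensor_apply sum_distrib_right sum.swap[of _ F])

lemma ein_sum_right: "ein K A (sum f F) = (\<Sum>x\<in>F. ein K A (f x))"
  by (simp add: ein_def fun_eq_iff sum_tensor_apply sum_distrib_left sum.swap[of _ F])

lemma ein_tscale_left: "ein K (tscale c A) B = tscale c (ein K A B)"
  by (simp add: ein_def tscale_def sum_distrib_left mult.assoc)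

lemma ein_tscale_right: "ein K A (tscale c B) = tscale c (ein K A B)"
  by (simp add: ein_def tscale_def sum_distrib_left mult.left_commute)

lemma sum_tens: "(\<And>x. x \<in> F \<Longrightarrow> f x \<in> tens I J) \<Longrightarrow> sum f F \<in> tens I J"
  by (simp add: tens_def sum_tensor_apply)

lemma tscale_tens: "X \<in> tens I J \<Longrightarrow> tscale c X \<in> tens I J"
  by (simp add: tens_def tscale_def)

definition unit_tensor :: "nat list \<Rightarrow> nat list \<Rightarrow> tensor" where
  "unit_tensor a b = (\<lambda>is js. if is = a \<and> js = b then 1 else 0)"

lemma tens_subset_span_unit_tensors:
  "tens I J \<subseteq> tensor.span ((\<lambda>(a, b). unit_tensor a b) ` (midx I \<times> midx J))"
proof
  fix X assume X: "X \<in> tens I J"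
  have "(\<Sum>(a, b)\<in>midx I \<times> midx J. tscale (X a b) (unit_tensor a b)) is js
      = (\<Sum>p\<in>midx I \<times> midx J. if p = (is, js) then X is js else 0)" for "is" js
    by (auto simp: sum_tensor_apply tscale_def unit_tensor_def intro: sum.cong)
  then have "X = (\<Sum>(a, b)\<in>midx I \<times> midx J. tscale (X a b) (unit_tensor a b))"
    using X by (auto simp: fun_eq_iff sum.delta' finite_midx tens_def)
  also have "\<dots> \<in> tensor.span ((\<lambda>(a, b). unit_tensor a b) ` (midx I \<times> midx J))"
    by (intro tensor.span_sum) (auto intro: tensor.span_scale tensor.span_base)
  finally show "X \<in> tensor.span ((\<lambda>(a, b). unit_tensor a b) ` (midx I \<times> midx J))" .
qed

lemma (in vector_space) nontrivial_relation_if_card_span_le: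
  assumes "finite B" "card B \<le> n" "f ` {..n} \<subseteq> span B"
  obtains c where "\<exists>k\<le>n. c k \<noteq> 0" "(\<Sum>k\<le>n. c k *s f k) = 0"
proof (cases "inj_on f {..n}")
  case True
  then have "card (f ` {..n}) = Suc n"
    by (simp add: card_image)
  then have "dependent (f ` {..n})"
    using independent_span_bound[OF assms(1) _ assms(3)] assms(2) by auto
  then obtain u where "\<exists>v\<in>f ` {..n}. u v \<noteq> 0" "(\<Sum>v\<in>f ` {..n}. u v *s v) = 0"
    by (auto simp: dependent_finite)
  with True show ?thesis
    by (intro that[of "u \<circ> f"]) (auto simp: sum.reindex)
next
  case False
  then obtain i j where ij: "i \<le> n" "j \<le> n" "i \<noteq> j" "f i = f j"
    by (auto simp: inj_on_def)
  let ?c = "\<lambda>k. if k = i then 1 else if k = j then - 1 else 0"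
  have "?c k *s f k = (if k = i then f i else 0) - (if k = j then f j else 0)" for k
    using ij by auto
  then have "(\<Sum>k\<le>n. ?c k *s f k) = 0"
    using ij by (simp add: sum_subtractf)
  with ij show ?thesis
    by (intro that[of ?c]) auto
qed

lemma mpow_lowest_term:
  assumes M: "M \<in> tens J J" and rel: "(\<Sum>k\<le>n. tscale (c k) (mpow J M k)) = 0"
    and r: "c r \<noteq> 0" "r \<le> n" "\<And>k. k < r \<Longrightarrow> c k = 0"
  defines "S \<equiv> \<Sum>k\<in>{Suc r..n}. tscale (c k) (mpow J M (k - Suc r))"
  shows "mpow J M r = ein J (mpow J M (Suc r)) (tscale (- 1 / c r) S)"
proof -
  have "(\<Sum>k\<le>n. tscale (c k) (mpow J M k)) = (\<Sum>k\<in>{r..n}. tscale (c k) (mpow J M k))"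
    using r(3) by (intro sum.mono_neutral_right) (auto simp: tscale_def fun_eq_iff)
  also have "\<dots> = tscale (c r) (mpow J M r) + (\<Sum>k\<in>{Suc r..n}. tscale (c k) (mpow J M k))"
    using r(2) by (simp add: sum.atLeast_Suc_atMost)
  also have "(\<Sum>k\<in>{Suc r..n}. tscale (c k) (mpow J M k)) = ein J (mpow J M (Suc r)) S"
    unfolding S_def ein_sum_right ein_tscale_right
  proof (intro sum.cong refl)
    fix k assume "k \<in> {Suc r..n}"
    then show "tscale (c k) (mpow J M k)
        = tscale (c k) (ein J (mpow J M (Suc r)) (mpow J M (k - Suc r)))"
      using mpow_add[OF M, of "Suc r" "k - Suc r"] by (simp only: atLeastAtMost_iff le_add_diff_inverse)
  qed
  finally have "tscale (c r) (mpow J M r) + ein J (mpow J M (Suc r)) S = 0"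
    using rel by metis
  with r(1) show ?thesis
    unfolding ein_tscale_right by (auto simp: tscale_def fun_eq_iff field_simps add_eq_0_iff)
qed

lemma mpow_relation:
  assumes M: "M \<in> tens J J"
  obtains r q where "q \<in> tens J J" "ein J q M = ein J M q"
    "mpow J M r = ein J (mpow J M (Suc r)) q"
proof -
  define n where "n = card (midx J \<times> midx J)"
  define U where "U = (\<lambda>(a, b). unit_tensor a b) ` (midx J \<times> midx J)"
  have "finite U"
    by (simp add: U_def finite_midx)
  moreover have "card U \<le> n"
    unfolding U_def n_def by (rule card_image_le) (simp add: finite_midx)
  moreover have "mpow J M ` {..n} \<subseteq> tensor.span U"
    using tens_subset_span_unit_tensors mpow_tens[OF M] by (auto simp: U_def)
  ultimately obtain c where c: "\<exists>k\<le>n. c k \<noteq> 0" "(\<Sum>k\<le>n. tscale (c k) (mpow J M k)) = 0"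
    by (rule tensor.nontrivial_relation_if_card_span_le)
  define r where "r = (LEAST k. c k \<noteq> 0)"
  from c(1) obtain k where k: "k \<le> n" "c k \<noteq> 0"
    by blast
  have r: "c r \<noteq> 0" "r \<le> n"
    using LeastI[of "\<lambda>k. c k \<noteq> 0", OF k(2)] Least_le[of "\<lambda>k. c k \<noteq> 0", OF k(2)] k(1)
    by (simp_all add: r_def)
  have below_r: "\<And>k. k < r \<Longrightarrow> c k = 0"
    unfolding r_def using not_less_Least by blast
  define q where "q = tscale (- 1 / c r) (\<Sum>k\<in>{Suc r..n}. tscale (c k) (mpow J M (k - Suc r)))"
  have "mpow J M r = ein J (mpow J M (Suc r)) q"
    unfolding q_def using M c(2) r below_r by (rule mpow_lowest_term)
  moreover have "q \<in> tens J J"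
    unfolding q_def by (intro tscale_tens sum_tens mpow_tens[OF M])
  moreover have "ein J q M = ein J M q"
    unfolding q_def ein_tscale_left ein_tscale_right ein_sum_left ein_sum_right
    by (simp add: mpow_Suc_right[OF M, symmetric])
  ultimately show ?thesis
    using that by blast
qed

lemma hermitian_mpow_cancel:
  assumes M: "M \<in> tens J J" "hermitian M"
    and "ein J (mpow J M (Suc k)) Z = ein J (mpow J M (Suc k)) W"
  shows "ein J M Z = ein J M W"
  using assms(3)
proof (induction k)
  case 0
  then show ?case
    by (simp add: ein_id_tensor_right[OF M(1)])
next
  case (Suc k)
  have "ein J (ctrans M) (ein J M (ein J (mpow J M k) Z))
      = ein J (ctrans M) (ein J M (ein J (mpow J M k) W))"
    using Suc.prems M(2) by (simp add: ein_assoc)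
  then have "ein J M (ein J (mpow J M k) Z) = ein J M (ein J (mpow J M k) W)"
    by (rule ein_ctrans_cancel[OF M(1)])
  then show ?case
    by (intro Suc.IH) (simp add: ein_assoc)
qed

lemma hermitian_ginverse_exists:
  assumes M: "M \<in> tens J J" "hermitian M"
  obtains Q where "Q \<in> tens J J" "ein J Q M = ein J M Q" "ein J M (ein J M Q) = M"
proof -
  obtain r q where q: "q \<in> tens J J" "ein J q M = ein J M q"
    "mpow J M r = ein J (mpow J M (Suc r)) q"
    using mpow_relation[OF M(1)] .
  have "ein J (mpow J M (Suc r)) (id_tensor J) = mpow J M (Suc r)"
    by (rule ein_id_tensor_right[OF mpow_tens[OF M(1)]])
  also have "\<dots> = ein J (mpow J M (Suc (Suc r))) q"
    by (metis q(3) mpow.simps(2) ein_assoc)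
  also have "\<dots> = ein J (mpow J M (Suc r)) (ein J M q)"
    by (simp only: mpow_Suc_right[OF M(1), of "Suc r"] ein_assoc)
  finally have "ein J M (id_tensor J) = ein J M (ein J M q)"
    by (rule hermitian_mpow_cancel[OF M])
  with q(1,2) show ?thesis
    using that ein_id_tensor_right[OF M(1)] by metis
qed

lemma is_mpinv_hermitian_ginverse:
  assumes M: "M \<in> tens J J" "hermitian M"
    and Q: "Q \<in> tens J J" "ein J Q M = ein J M Q" "ein J M (ein J M Q) = M"
  shows "is_mpinv J J M (ein J Q (ein J M (ctrans Q)))"
proof -
  have MQM: "ein J M (ein J Q M) = M"
    using Q(2,3) by simp
  have MQhM: "ein J M (ein J (ctrans Q) M) = M"
    using MQM M(2) by (metis ctrans_ein ein_assoc)
  have "ein J (ein J Q M) (ein J M (ctrans Q)) = ein J M (ctrans Q)"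
    using MQM Q(2) by (metis ein_assoc)
  then have "hermitian (ein J M (ctrans Q))"
    using M(2) by (metis ctrans_ein ctrans_ctrans)
  then have QM: "ein J Q M = ein J M (ctrans Q)"
    using M(2) by (metis ctrans_ein ctrans_ctrans)
  have "ein J (ein J M (ein J Q (ein J M (ctrans Q)))) M = M"
    using MQM MQhM by (metis ein_assoc)
  moreover have "ein J (ein J (ein J Q (ein J M (ctrans Q))) M) (ein J Q (ein J M (ctrans Q)))
      = ein J Q (ein J M (ctrans Q))"
    using MQM MQhM by (metis ein_assoc)
  moreover have "hermitian (ein J M (ein J Q (ein J M (ctrans Q))))"
    using MQM QM M(2) by (metis ctrans_ein ein_assoc)
  moreover have "hermitian (ein J (ein J Q (ein J M (ctrans Q))) M)"
    using MQhM QM M(2) by (metis ctrans_ein ein_assoc)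
  ultimately show ?thesis
    using M Q(1) by (simp add: is_mpinv_def ein_tens ctrans_tens)
qed

lemma hermitian_mpinv: "hermitian M \<Longrightarrow> is_mpinv J J M X \<Longrightarrow> hermitian X"
  using is_mpinv_ctrans is_mpinv_unique by metis

lemma is_mpinv_of_gram:
  assumes A: "A \<in> tens I J" and Mp: "is_mpinv J J (ein I (ctrans A) A) Mp"
  shows "is_mpinv I J A (ein J Mp (ctrans A))"
proof -
  note m = is_mpinvD[OF Mp]
  have "hermitian Mp"
    using hermitian_mpinv Mp by (metis ctrans_ctrans ctrans_ein)
  have "ein I (ctrans A) (ein J A (ein J Mp (ein I (ctrans A) A)))
      = ein I (ctrans A) (ein J A (id_tensor J))"
    using m(2) A by (simp add: ein_assoc ein_id_tensor_right)
  then have AMpM: "ein J A (ein J Mp (ein I (ctrans A) A)) = A"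
    using ein_ctrans_cancel[OF A] ein_id_tensor_right[OF A] by metis
  have "ein J (ein I (ein J Mp (ctrans A)) A) (ein J Mp (ctrans A)) = ein J Mp (ctrans A)"
    using is_mpinv_absorb(2)[OF Mp, of "ctrans A"] by (simp add: ein_assoc)
  moreover have "hermitian (ein J A (ein J Mp (ctrans A)))"
    using \<open>hermitian Mp\<close> by (simp add: ctrans_ein ein_assoc)
  ultimately show ?thesis
    using A m(1,5) AMpM by (simp add: is_mpinv_def ein_tens ctrans_tens ein_assoc)
qed

lemma mpinv_exists:
  assumes "A \<in> tens I J"
  shows "\<exists>X. is_mpinv I J A X"
proof -
  let ?M = "ein I (ctrans A) A"
  have M: "?M \<in> tens J J" "hermitian ?M"
    using assms by (simp_all add: ein_tens ctrans_tens ctrans_ein)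
  then obtain Q where "Q \<in> tens J J" "ein J Q ?M = ein J ?M Q" "ein J ?M (ein J ?M Q) = ?M"
    by (rule hermitian_ginverse_exists)
  then show ?thesis
    using is_mpinv_of_gram[OF assms is_mpinv_hermitian_ginverse[OF M]] by blast
qed

lemma is_mpinv_mpinv: "A \<in> tens I J \<Longrightarrow> is_mpinv I J A (mpinv I J A)"
  unfolding mpinv_def using mpinv_exists is_mpinv_unique by (metis theI)

lemma mpinv_eq_iff: "A \<in> tens I J \<Longrightarrow> X = mpinv I J A \<longleftrightarrow> is_mpinv I J A X"
  using is_mpinv_mpinv is_mpinv_unique by metis

section \<open>Compressions by one-sided factors\<close>

lemma is_mpinv_right_compression_iff:
  assumes Tp: "Tp \<in> tens J G" and A: "ein J A (ein G Tp T) = A"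
    and Xp: "is_mpinv I G (ein J A Tp) Xp"
  shows "is_mpinv I J A (ein G Tp Xp) \<longleftrightarrow> hermitian (ein I (ein G Tp Xp) A)"
proof -
  note x = is_mpinvD[OF Xp]
  have "ein I (ein J A (ein G Tp Xp)) A = ein I (ein J A (ein G Tp Xp)) (ein J A (ein G Tp T))"
    by (simp only: A)
  also have "\<dots> = ein G (ein G (ein J A Tp) (ein I Xp (ein J A Tp))) T"
    by (simp only: ein_assoc)
  also have "\<dots> = A"
    unfolding x(2) by (simp only: ein_assoc A)
  finally have "ein I (ein J A (ein G Tp Xp)) A = A" .
  moreover have "ein J (ein I (ein G Tp Xp) A) (ein G Tp Xp) = ein G Tp Xp"
    using x(3) by (simp add: ein_assoc)
  moreover have "hermitian (ein J A (ein G Tp Xp))"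
    using x(4) by (simp add: ein_assoc)
  ultimately show ?thesis
    using Tp x(1) by (simp add: is_mpinv_def ein_tens)
qed

lemma is_mpinv_left_compression_iff:
  assumes Rp: "Rp \<in> tens H I" and A: "ein H R (ein I Rp A) = A"
    and Yp: "is_mpinv H J (ein I Rp A) Yp"
  shows "is_mpinv I J A (ein H Yp Rp) \<longleftrightarrow> hermitian (ein J A (ein H Yp Rp))"
proof -
  have "is_mpinv J I (ctrans A) (ein H (ctrans Rp) (ctrans Yp))
      \<longleftrightarrow> hermitian (ein J (ein H (ctrans Rp) (ctrans Yp)) (ctrans A))"
  proof (rule is_mpinv_right_compression_iff)
    show "ctrans Rp \<in> tens I H"
      using Rp by (rule ctrans_tens)
    show "ein I (ctrans A) (ein H (ctrans Rp) (ctrans R)) = ctrans A"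
      using arg_cong[OF A, of ctrans] by (simp only: ctrans_ein ein_assoc)
    show "is_mpinv J H (ein I (ctrans A) (ctrans Rp)) (ctrans Yp)"
      using is_mpinv_ctrans[OF Yp] by (simp only: ctrans_ein)
  qed
  then show ?thesis
    unfolding ctrans_ein[symmetric] is_mpinv_ctrans_iff hermitian_ctrans_iff .
qed

lemma range_projector_eq:
  assumes Y: "is_mpinv H J Y Yp" and Z: "is_mpinv H G Z Zp"
    and YZ: "Y = ein G Z U" and ZY: "Z = ein J Y V"
  shows "ein J Y Yp = ein G Z Zp"
proof -
  have "ein H (ein G Z Zp) (ein J Y Yp) = ein J Y Yp"
    unfolding YZ by (simp add: ein_assoc is_mpinv_absorb[OF Z])
  moreover have "ein H (ein J Y Yp) (ein G Z Zp) = ein G Z Zp"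
    unfolding ZY by (simp add: ein_assoc is_mpinv_absorb[OF Y])
  moreover note is_mpinvD(4)[OF Y] is_mpinvD(4)[OF Z]
  ultimately show ?thesis
    by (metis ctrans_ein)
qed

lemma corange_projector_eq:
  assumes X: "is_mpinv I G X Xp" and Y: "is_mpinv H G Y Yp"
    and "X = ein H U Y" "Y = ein I V X"
  shows "ein I Xp X = ein H Yp Y"
proof -
  have "ein I (ctrans X) (ctrans Xp) = ein H (ctrans Y) (ctrans Yp)"
  proof (rule range_projector_eq[OF is_mpinv_ctrans[OF X] is_mpinv_ctrans[OF Y]])
    show "ctrans X = ein H (ctrans Y) (ctrans U)"
      using arg_cong[OF assms(3), of ctrans] by (simp only: ctrans_ein)
    show "ctrans Y = ein I (ctrans X) (ctrans V)"
      using arg_cong[OF assms(4), of ctrans] by (simp only: ctrans_ein)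
  qed
  then have "ctrans (ein I Xp X) = ctrans (ein H Yp Y)"
    by (simp only: ctrans_ein)
  then show ?thesis
    by (metis ctrans_ctrans)
qed

lemma is_mpinv_absorb_hermitian_right:
  assumes N: "is_mpinv H J N Np" and E: "hermitian E" "ein H E N = N"
  shows "ein H Np E = Np"
proof -
  have "Np = ein H Np (ein J (ctrans Np) (ctrans N))"
    using is_mpinvD(3,4)[OF N] by (simp add: ein_assoc ctrans_ein)
  moreover have "ein H (ctrans N) E = ctrans N"
    using arg_cong[OF E(2), of ctrans] E(1) by (simp only: ctrans_ein)
  ultimately show ?thesis
    by (metis ein_assoc)
qed

lemma is_mpinv_absorb_hermitian_left:
  assumes N: "is_mpinv I G N Np" and E: "hermitian E" "ein G N E = N"
  shows "ein G E Np = Np"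
proof -
  have "ein G (ctrans E) (ctrans N) = ctrans N"
    using arg_cong[OF E(2), of ctrans] by (simp only: ctrans_ein)
  then have "ein G (ctrans Np) E = ctrans Np"
    using E(1) by (intro is_mpinv_absorb_hermitian_right[OF is_mpinv_ctrans[OF N]]) simp_all
  then show ?thesis
    using E(1) by (metis ctrans_ein ctrans_ctrans)
qed

(* Rp and Tp play the roles of R\<^sup>+ and T\<^sup>+; Xp, A1p and X1p are inverses of the
   compressions A T\<^sup>+, R\<^sup>+ A and R\<^sup>+ A T\<^sup>+. In the theorem, B = Tp Xp, C = A1p Rp and
   the product inverse is Tp X1p Rp. *)
locale triple_factorization =
  fixes I J H G :: "nat list" and R Rp T Tp A Xp A1p X1p :: tensor
  assumes R: "is_mpinv I H R Rp" and T: "is_mpinv G J T Tp"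
    and left_factor: "ein H R (ein I Rp A) = A"
    and right_factor: "ein J A (ein G Tp T) = A"
    and Xp: "is_mpinv I G (ein J A Tp) Xp"
    and A1p: "is_mpinv H J (ein I Rp A) A1p"
    and X1p: "is_mpinv H G (ein I Rp (ein J A Tp)) X1p"
begin

lemma left_factor_absorb: "ein H R (ein I Rp (ein J A Z)) = ein J A Z"
  using left_factor by (metis ein_assoc)

lemma left_compression_right_factor: "ein J (ein I Rp A) (ein G Tp T) = ein I Rp A"
  using right_factor by (simp add: ein_assoc)

lemma right_reverse_order_iff:
  "is_mpinv I J A (ein G Tp Xp) \<longleftrightarrow> ein H A1p Rp = ein H (ein G Tp X1p) Rp"
proof -
  have "ein I Xp (ein J A Tp) = ein H X1p (ein I Rp (ein J A Tp))"
    by (rule corange_projector_eq[OF Xp X1p, where U = R and V = Rp])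
      (simp_all add: left_factor_absorb)
  then have "ein I (ein G Tp Xp) A = ein H (ein G Tp X1p) (ein I Rp A)"
    by (metis ein_assoc right_factor)
  then have "is_mpinv I J A (ein G Tp Xp) \<longleftrightarrow> is_mpinv H J (ein I Rp A) (ein G Tp X1p)"
    using is_mpinv_right_compression_iff[OF is_mpinvD(1)[OF T] right_factor Xp]
      is_mpinv_right_compression_iff[OF is_mpinvD(1)[OF T] left_compression_right_factor X1p[folded ein_assoc]]
    by (simp add: ein_assoc)
  also have "\<dots> \<longleftrightarrow> ein G Tp X1p = A1p"
    using A1p is_mpinv_unique by metis
  also have "\<dots> \<longleftrightarrow> ein H A1p Rp = ein H (ein G Tp X1p) Rp"
  proof
    assume "ein H A1p Rp = ein H (ein G Tp X1p) Rp"
    then have "ein H A1p (ein I Rp R) = ein H (ein G Tp X1p) (ein I Rp R)"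
      by (metis ein_assoc)
    moreover have "ein H A1p (ein I Rp R) = A1p"
      using A1p is_mpinvD(5)[OF R]
      by (rule is_mpinv_absorb_hermitian_right) (simp add: ein_assoc is_mpinv_absorb[OF R])
    moreover have "ein H X1p (ein I Rp R) = X1p"
      using X1p is_mpinvD(5)[OF R]
      by (rule is_mpinv_absorb_hermitian_right) (simp add: ein_assoc is_mpinv_absorb[OF R])
    ultimately show "ein G Tp X1p = A1p"
      by (simp add: ein_assoc)
  qed simp
  finally show ?thesis .
qed

lemma left_reverse_order_iff:
  "is_mpinv I J A (ein H A1p Rp) \<longleftrightarrow> ein G Tp Xp = ein H (ein G Tp X1p) Rp"
proof -
  have "ein J (ein I Rp A) A1p = ein G (ein I Rp (ein J A Tp)) X1p"
    by (rule range_projector_eq[OF A1p X1p, where U = T and V = Tp])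
      (simp_all add: ein_assoc right_factor)
  then have "ein J A (ein H A1p Rp) = ein G (ein J A Tp) (ein H X1p Rp)"
    by (metis ein_assoc left_factor)
  then have "is_mpinv I J A (ein H A1p Rp) \<longleftrightarrow> is_mpinv I G (ein J A Tp) (ein H X1p Rp)"
    using is_mpinv_left_compression_iff[OF is_mpinvD(1)[OF R] left_factor A1p]
      is_mpinv_left_compression_iff[OF is_mpinvD(1)[OF R] left_factor_absorb X1p]
    by simp
  also have "\<dots> \<longleftrightarrow> ein H X1p Rp = Xp"
    using Xp is_mpinv_unique by metis
  also have "\<dots> \<longleftrightarrow> ein G Tp Xp = ein H (ein G Tp X1p) Rp"
  proof
    assume "ein G Tp Xp = ein H (ein G Tp X1p) Rp"
    then have "ein G (ein J T Tp) Xp = ein G (ein J T Tp) (ein H X1p Rp)"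
      by (metis ein_assoc)
    moreover have "ein G (ein J T Tp) Xp = Xp"
      using Xp is_mpinvD(4)[OF T]
      by (rule is_mpinv_absorb_hermitian_left) (simp add: ein_assoc is_mpinvD(3)[OF T])
    moreover have "ein G (ein J T Tp) X1p = X1p"
      using X1p is_mpinvD(4)[OF T]
      by (rule is_mpinv_absorb_hermitian_left) (simp add: ein_assoc is_mpinvD(3)[OF T])
    ultimately show "ein H X1p Rp = Xp"
      by (metis ein_assoc)
  qed (simp add: ein_assoc)
  finally show ?thesis .
qed

end

theorem theorem3p10:
  fixes I J H G :: "nat list" and R S T A B C :: tensor
  assumes "I \<noteq> []" "J \<noteq> []" "H \<noteq> []" "G \<noteq> []"
    and "\<forall>d\<in>set I. d > 0" "\<forall>d\<in>set J. d > 0" "\<forall>d\<in>set H. d > 0" "\<forall>d\<in>set G. d > 0"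
    and "R \<in> tens I H" "S \<in> tens H G" "T \<in> tens G J"
    and "A = ein G (ein H R S) T"
    and "B = ein G (mpinv G J T) (mpinv I G (ein J A (mpinv G J T)))"
    and "C = ein H (mpinv H J (ein I (mpinv I H R) A)) (mpinv I H R)"
  shows "(B = mpinv I J A \<longleftrightarrow> C = pmpinv I J H G R A T) \<and>
         (B = pmpinv I J H G R A T \<longleftrightarrow> C = mpinv I J A)"
proof -
  note R = is_mpinv_mpinv[OF assms(9)] and T = is_mpinv_mpinv[OF assms(11)]
  let ?Rp = "mpinv I H R" and ?Tp = "mpinv G J T"
  have A: "A \<in> tens I J"
    using assms(9-12) by (simp add: ein_tens)
  have "ein H R (ein I ?Rp A) = A" "ein J A (ein G ?Tp T) = A"
    using assms(12) by (simp_all add: ein_assoc is_mpinv_absorb(1)[OF R] is_mpinvD(2)[OF T])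
  moreover have "ein J A ?Tp \<in> tens I G" "ein I ?Rp A \<in> tens H J"
    using A is_mpinvD(1)[OF R] is_mpinvD(1)[OF T] by (simp_all add: ein_tens)
  ultimately interpret triple_factorization I J H G R ?Rp T ?Tp A "mpinv I G (ein J A ?Tp)"
    "mpinv H J (ein I ?Rp A)" "mpinv H G (ein I ?Rp (ein J A ?Tp))"
    using R T by unfold_locales (simp_all add: is_mpinv_mpinv ein_tens is_mpinvD(1)[OF R])
  show ?thesis
    using right_reverse_order_iff left_reverse_order_iff
    by (simp add: assms(13,14) pmpinv_def mpinv_eq_iff[OF A] ein_assoc)
qed

end
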